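(* Let $d\ge2$ be an integer and $g(b,x):=b^d\big(\frac{1+x+x^2}{1+b+bx}\big)^d$ for $0\le b,x\le1$. For $b\in(0,1]$, the map $x\mapsto g(b,x)$ is increasing and convex on $(0,1]$ and has a unique fixed point $c_0=c_0(b)$ in $(0,1)$. Moreover, writing $g_b(x)=g(b,x)$, for every fixed $b\in(0,1]$ and every $0\le c<1$ the iterates $g_b^{(i)}(c)$ converge to $c_0(b)$ as $i\to\infty$. Also, $g_b(x)>x$ if and only if $x<c_0(b)$. *)

theory Defs
  imports "HOL-Analysis.Analysis"
begin

definition gfun :: "nat \<Rightarrow> real \<Rightarrow> real \<Rightarrow> real" where
  "gfun d b x = b ^ d * ((1 + x + x^2) / (1 + b + b * x)) ^ d"

end

theory Submission
  imports Defs
begin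

(* Write g = h^d with h(x) = b(1 + x + x^2)/(1 + b + bx). On [0,oo) the factor h is positive
   and increasing with increasing derivative, so g' = d h' h^(d-1) is strictly increasing and
   g(x) - x is strictly convex there. Since g(0) > 0, g(9/10) < 9/10 (this needs d >= 2) and
   g(1) <= 1, the function g(x) - x has exactly one zero c0 in (0,1), is positive on [0,c0) and
   negative on (c0,1). Hence the iterates of the increasing map g from c in [0,1) move
   monotonically towards c0, and their limit is a fixed point in [0,1), i.e. c0. *)

lemma strict_mono_deriv_rise_propagates:
  fixes f f' :: "real \<Rightarrow> real"
  assumes deriv: "\<And>x. p \<le> x \<Longrightarrow> x \<le> r \<Longrightarrow> (f has_real_derivative f' x) (at x)"
    and f'_mono: "strict_mono_on {p..r} f'"
    and "p < q" "q < r" and rise: "f p \<le> f q"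
  shows "f q < f r"
proof -
  obtain s where s: "p < s" "s < q" "f q - f p = (q - p) * f' s"
    using MVT2[of p q f f'] deriv \<open>p < q\<close> \<open>q < r\<close> by auto
  obtain t where t: "q < t" "t < r" "f r - f q = (r - q) * f' t"
    using MVT2[of q r f f'] deriv \<open>p < q\<close> \<open>q < r\<close> by auto
  have "0 \<le> (q - p) * f' s"
    using s(3) rise by simp
  then have "0 \<le> f' s"
    using \<open>p < q\<close> by (simp add: zero_le_mult_iff)
  also have "f' s < f' t"
    using strict_mono_onD[OF f'_mono] s t \<open>p < q\<close> \<open>q < r\<close> by simp
  finally have "0 < (r - q) * f' t"
    using \<open>q < r\<close> by simp
  then show ?thesis
    using t(3) by linarith
qed

lemma sign_around_zero_of_strict_mono_deriv:
  fixes f f' :: "real \<Rightarrow> real"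
  assumes deriv: "\<And>x. a \<le> x \<Longrightarrow> x \<le> b \<Longrightarrow> (f has_real_derivative f' x) (at x)"
    and f'_mono: "strict_mono_on {a..b} f'"
    and "f b \<le> 0" and "a \<le> c" "c < b" "f c = 0"
  shows pos_before_zero: "\<And>x. a \<le> x \<Longrightarrow> x < c \<Longrightarrow> 0 < f x"
    and neg_after_zero: "\<And>x. c < x \<Longrightarrow> x < b \<Longrightarrow> f x < 0"
proof -
  have rise: "f q < f b" if "a \<le> p" "p < q" "q < b" "f p \<le> f q" for p q
    using that deriv monotone_on_subset[OF f'_mono, of "{p..b}"]
    by (intro strict_mono_deriv_rise_propagates[of p b f f' q]) auto
  show "0 < f x" if "a \<le> x" "x < c" for x
    using rise[of x c] that assms by force
  show "f x < 0" if "c < x" "x < b" for x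
    using rise[of c x] that assms by force
qed

lemma fixpoint_of_convergent_iterates:
  fixes f :: "'a::t2_space \<Rightarrow> 'a"
  assumes "continuous_on S f" and "(\<lambda>i. (f ^^ i) c) \<longlonglongrightarrow> L" and "L \<in> S"
    and "\<And>i. (f ^^ i) c \<in> S"
  shows "f L = L"
proof -
  have "(\<lambda>i. f ((f ^^ i) c)) \<longlonglongrightarrow> f L"
    by (rule continuous_on_tendsto_compose[OF assms(1-3)]) (simp add: assms(4))
  moreover have "(\<lambda>i. (f ^^ Suc i) c) \<longlonglongrightarrow> L"
    by (rule LIMSEQ_Suc[OF assms(2)])
  ultimately show ?thesis
    by (simp add: LIMSEQ_unique)
qed

lemma iterates_tendsto_fixpoint_from_below:
  fixes f :: "real \<Rightarrow> real"
  assumes mono: "mono_on {c..c0} f" and cont: "continuous_on {c..c0} f"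
    and fixed: "f c0 = c0" and below: "\<And>x. c \<le> x \<Longrightarrow> x < c0 \<Longrightarrow> x < f x"
    and "c \<le> c0"
  shows "(\<lambda>i. (f ^^ i) c) \<longlonglongrightarrow> c0"
proof -
  define X where "X = (\<lambda>i. (f ^^ i) c)"
  have step: "x \<le> f x \<and> f x \<le> c0" if "x \<in> {c..c0}" for x
    using that below[of x] fixed mono_onD[OF mono, of x c0] \<open>c \<le> c0\<close>
    by (cases "x = c0") auto
  have X_in: "X i \<in> {c..c0}" for i
    by (induction i) (use \<open>c \<le> c0\<close> step in \<open>force simp: X_def\<close>)+
  have "incseq X"
    using step X_in by (intro incseq_SucI) (simp add: X_def)
  then obtain L where L: "X \<longlonglongrightarrow> L" "\<And>i. X i \<le> L"
    using incseq_convergent[of X c0] X_in by auto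
  have "L \<in> {c..c0}"
    using L(2)[of 0] LIMSEQ_le_const2[OF L(1)] X_in by (auto simp: X_def)
  moreover have "f L = L"
    using fixpoint_of_convergent_iterates[OF cont, of c L] L(1) X_in \<open>L \<in> {c..c0}\<close>
    unfolding X_def by blast
  ultimately have "L = c0"
    using below[of L] by (metis atLeastAtMost_iff less_le)
  then show ?thesis
    using L(1) by (simp add: X_def)
qed

lemma iterates_tendsto_fixpoint_from_above:
  fixes f :: "real \<Rightarrow> real"
  assumes mono: "mono_on {c0..c} f" and cont: "continuous_on {c0..c} f"
    and fixed: "f c0 = c0" and above: "\<And>x. c0 < x \<Longrightarrow> x \<le> c \<Longrightarrow> f x < x"
    and "c0 \<le> c"
  shows "(\<lambda>i. (f ^^ i) c) \<longlonglongrightarrow> c0"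
proof -
  define X where "X = (\<lambda>i. (f ^^ i) c)"
  have step: "c0 \<le> f x \<and> f x \<le> x" if "x \<in> {c0..c}" for x
    using that above[of x] fixed mono_onD[OF mono, of c0 x] \<open>c0 \<le> c\<close>
    by (cases "x = c0") auto
  have X_in: "X i \<in> {c0..c}" for i
    by (induction i) (use \<open>c0 \<le> c\<close> step in \<open>force simp: X_def\<close>)+
  have "decseq X"
    using step X_in by (intro decseq_SucI) (simp add: X_def)
  then obtain L where L: "X \<longlonglongrightarrow> L" "\<And>i. L \<le> X i"
    using decseq_convergent[of X c0] X_in by auto
  have "L \<in> {c0..c}"
    using L(2)[of 0] LIMSEQ_le_const[OF L(1)] X_in by (auto simp: X_def)
  moreover have "f L = L"
    using fixpoint_of_convergent_iterates[OF cont, of c L] L(1) X_in \<open>L \<in> {c0..c}\<close>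
    unfolding X_def by blast
  ultimately have "L = c0"
    using above[of L] by (metis atLeastAtMost_iff less_le)
  then show ?thesis
    using L(1) by (simp add: X_def)
qed

lemma iterates_tendsto_fixpoint:
  fixes f :: "real \<Rightarrow> real"
  assumes mono: "mono_on {a..b} f" and cont: "continuous_on {a..b} f"
    and "c0 \<in> {a..b}" and fixed: "f c0 = c0"
    and below: "\<And>x. a \<le> x \<Longrightarrow> x < c0 \<Longrightarrow> x < f x"
    and above: "\<And>x. c0 < x \<Longrightarrow> x \<le> b \<Longrightarrow> f x < x"
    and "c \<in> {a..b}"
  shows "(\<lambda>i. (f ^^ i) c) \<longlonglongrightarrow> c0"
proof (cases "c \<le> c0")
  case True
  then have "{c..c0} \<subseteq> {a..b}"
    using assms(3,7) by auto
  then show ?thesis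
    using True fixed below assms(7)
    by (intro iterates_tendsto_fixpoint_from_below mono_on_subset[OF mono]
        continuous_on_subset[OF cont]) auto
next
  case False
  then have "{c0..c} \<subseteq> {a..b}"
    using assms(3,7) by auto
  then show ?thesis
    using False fixed above assms(7)
    by (intro iterates_tendsto_fixpoint_from_above mono_on_subset[OF mono]
        continuous_on_subset[OF cont]) auto
qed

definition gfun_base :: "real \<Rightarrow> real \<Rightarrow> real" where
  "gfun_base b x = b * (1 + x + x^2) / (1 + b + b * x)"

definition gfun_base_deriv :: "real \<Rightarrow> real \<Rightarrow> real" where
  "gfun_base_deriv b x = 1 - (1 + b + b^2) / (1 + b + b * x)^2"

definition gfun_deriv :: "nat \<Rightarrow> real \<Rightarrow> real \<Rightarrow> real" where
  "gfun_deriv d b x = real d * gfun_base_deriv b x * gfun_base b x ^ (d - 1)"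

lemma gfun_eq_gfun_base_power: "gfun d b x = gfun_base b x ^ d"
  unfolding gfun_def gfun_base_def by (simp add: power_mult_distrib[symmetric])

lemma gfun_base_denominator_pos:
  fixes b x :: real
  assumes "0 < b" and "-1 < x"
  shows "0 < 1 + b + b * x"
proof -
  have "0 < b * (1 + x)"
    using assms by simp
  then show ?thesis
    by (simp add: algebra_simps)
qed

lemma gfun_base_has_real_derivative:
  assumes "0 < b" and "-1 < x"
  shows "(gfun_base b has_real_derivative gfun_base_deriv b x) (at x)"
proof -
  let ?u = "1 + b + b * x"
  have u: "0 < ?u"
    using gfun_base_denominator_pos[OF assms] .
  have "((\<lambda>x. b * (1 + x + x^2) / (1 + b + b * x)) has_real_derivative
      (b * (1 + 2 * x) * ?u - b * (1 + x + x^2) * b) / ?u^2) (at x)"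
    using u by (auto intro!: derivative_eq_intros simp: power2_eq_square)
  moreover have "(b * (1 + 2 * x) * ?u - b * (1 + x + x^2) * b) / ?u^2 = gfun_base_deriv b x"
    using u unfolding gfun_base_deriv_def
    by (simp add: divide_simps power2_eq_square) (simp add: algebra_simps)
  ultimately show ?thesis
    unfolding gfun_base_def[abs_def] by simp
qed

lemma gfun_has_real_derivative:
  assumes "0 < b" and "-1 < x"
  shows "(gfun d b has_real_derivative gfun_deriv d b x) (at x)"
  using DERIV_power[OF gfun_base_has_real_derivative[OF assms], of d]
  unfolding gfun_eq_gfun_base_power[abs_def] gfun_deriv_def by (simp add: mult_ac)

lemma continuous_on_gfun:
  assumes "0 < b"
  shows "continuous_on {0..} (gfun d b)"
proof (rule continuous_at_imp_continuous_on, rule ballI)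
  fix x :: real
  assume "x \<in> {0..}"
  then show "isCont (gfun d b) x"
    using DERIV_isCont[OF gfun_has_real_derivative[OF assms]] by simp
qed

lemma gfun_base_pos: "0 < b \<Longrightarrow> 0 \<le> x \<Longrightarrow> 0 < gfun_base b x"
  unfolding gfun_base_def using gfun_base_denominator_pos[of b x] by (simp add: add_pos_nonneg)

lemma gfun_base_le_one:
  assumes "0 < b" "b \<le> 1" "0 \<le> x" "x \<le> 1"
  shows "gfun_base b x \<le> 1"
proof -
  have "b * x^2 \<le> 1"
    using assms by (simp add: mult_le_one power_le_one)
  then have "b * (1 + x + x^2) \<le> 1 + b + b * x"
    by (simp add: algebra_simps)
  then show ?thesis
    unfolding gfun_base_def using gfun_base_denominator_pos[of b x] assms by simp
qed

lemma gfun_base_deriv_pos: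
  assumes "0 < b" and "0 \<le> x"
  shows "0 < gfun_base_deriv b x"
proof -
  have "1 + b + b^2 < (1 + b)^2"
    using assms by (simp add: power2_eq_square algebra_simps)
  also have "\<dots> \<le> (1 + b + b * x)^2"
    using assms by (simp add: power_mono)
  finally have "1 + b + b^2 < (1 + b + b * x)^2" .
  moreover have "0 < (1 + b + b * x)^2"
    using gfun_base_denominator_pos[of b x] assms by simp
  ultimately show ?thesis
    unfolding gfun_base_deriv_def by (simp add: field_simps)
qed

lemma strict_mono_on_gfun_base_deriv:
  assumes "0 < b"
  shows "strict_mono_on {0..} (gfun_base_deriv b)"
proof (rule strict_mono_onI)
  fix x y :: real
  assume "x \<in> {0..}" "y \<in> {0..}" "x < y"
  then have "(1 + b + b * x)^2 < (1 + b + b * y)^2"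
    using assms gfun_base_denominator_pos[of b x] by (simp add: power_strict_mono)
  moreover have "0 < 1 + b + b^2"
    using assms by (simp add: add_pos_nonneg)
  ultimately have "(1 + b + b^2) / (1 + b + b * y)^2 < (1 + b + b^2) / (1 + b + b * x)^2"
    using assms \<open>x \<in> {0..}\<close> gfun_base_denominator_pos[of b x]
    by (intro divide_strict_left_mono) (auto intro!: mult_pos_pos)
  then show "gfun_base_deriv b x < gfun_base_deriv b y"
    unfolding gfun_base_deriv_def by simp
qed

lemma strict_mono_on_gfun_base:
  assumes "0 < b"
  shows "strict_mono_on {0..} (gfun_base b)"
proof (rule strict_mono_onI)
  fix x y :: real
  assume "x \<in> {0..}" "y \<in> {0..}" "x < y"
  have "\<exists>D. (gfun_base b has_real_derivative D) (at t) \<and> 0 < D" if "x \<le> t" for t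
    using gfun_base_has_real_derivative[OF assms, of t] gfun_base_deriv_pos[OF assms, of t]
      that \<open>x \<in> {0..}\<close> by auto
  then show "gfun_base b x < gfun_base b y"
    using DERIV_pos_imp_increasing[OF \<open>x < y\<close>] by blast
qed

lemma strict_mono_on_gfun:
  assumes "1 \<le> d" and "0 < b"
  shows "strict_mono_on {0..} (gfun d b)"
proof (rule strict_mono_onI)
  fix x y :: real
  assume x: "x \<in> {0..}" and y: "y \<in> {0..}" and "x < y"
  have "gfun_base b x ^ d < gfun_base b y ^ d"
    using strict_mono_onD[OF strict_mono_on_gfun_base[OF assms(2)] x y \<open>x < y\<close>]
      gfun_base_pos[OF assms(2)] x assms(1)
    by (intro power_strict_mono) (auto simp: less_imp_le)
  then show "gfun d b x < gfun d b y"
    by (simp add: gfun_eq_gfun_base_power)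
qed

lemma strict_mono_on_gfun_deriv:
  assumes "1 \<le> d" and "0 < b"
  shows "strict_mono_on {0..} (gfun_deriv d b)"
proof (rule strict_mono_onI)
  fix x y :: real
  assume x: "x \<in> {0..}" and y: "y \<in> {0..}" and "x < y"
  have "gfun_base b x ^ (d - 1) \<le> gfun_base b y ^ (d - 1)"
    using strict_mono_onD[OF strict_mono_on_gfun_base[OF assms(2)] x y \<open>x < y\<close>]
      gfun_base_pos[OF assms(2)] x by (intro power_mono) (auto simp: less_imp_le)
  moreover have "gfun_base_deriv b x < gfun_base_deriv b y"
    using strict_mono_onD[OF strict_mono_on_gfun_base_deriv[OF assms(2)] x y \<open>x < y\<close>] .
  moreover have "0 < gfun_base_deriv b x" "0 < gfun_base b x ^ (d - 1)"
    using gfun_base_deriv_pos gfun_base_pos assms x by auto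
  ultimately have "gfun_base_deriv b x * gfun_base b x ^ (d - 1)
      < gfun_base_deriv b y * gfun_base b y ^ (d - 1)"
    by (intro mult_less_le_imp_less) auto
  then show "gfun_deriv d b x < gfun_deriv d b y"
    unfolding gfun_deriv_def using assms(1) by (simp add: mult.assoc)
qed

lemma convex_on_gfun:
  assumes "1 \<le> d" and "0 < b"
  shows "convex_on {0..} (gfun d b)"
  using assms gfun_has_real_derivative strict_mono_on_leD[OF strict_mono_on_gfun_deriv]
  by (intro convex_on_realI[where f' = "gfun_deriv d b"]) (auto simp: is_interval_connected)

lemma gfun_0_pos: "0 < b \<Longrightarrow> 0 < gfun d b 0"
  unfolding gfun_def by simp

lemma gfun_1_le_one: "0 < b \<Longrightarrow> b \<le> 1 \<Longrightarrow> gfun d b 1 \<le> 1"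
  unfolding gfun_eq_gfun_base_power
  using gfun_base_le_one[of b 1] gfun_base_pos[of b 1] by (simp add: power_le_one)

lemma gfun_nine_tenths_less:
  assumes "2 \<le> d" and "0 < b" and "b \<le> 1"
  shows "gfun d b (9/10) < 9/10"
proof -
  let ?h = "gfun_base b (9/10)"
  have h: "0 < ?h" "?h \<le> 1"
    using gfun_base_pos gfun_base_le_one assms by auto
  have "?h ^ d \<le> ?h ^ 2"
    using h assms(1) by (simp add: power_decreasing)
  also have "\<dots> \<le> (271/290)^2"
  proof (rule power_mono)
    have "?h = 271 * b / (100 + 190 * b)"
      unfolding gfun_base_def by (simp add: field_simps)
    also have "\<dots> \<le> 271/290"
      using assms(2,3) by (simp add: divide_simps)
    finally show "?h \<le> 271/290" .
  qed (use h in simp)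
  also have "\<dots> < 9/10"
    by (simp add: power2_eq_square)
  finally show ?thesis
    unfolding gfun_eq_gfun_base_power .
qed

lemma gfun_sign_around_fixpoint:
  assumes "1 \<le> d" and "0 < b" and "b \<le> 1"
    and "0 \<le> c0" and "c0 < 1" and "gfun d b c0 = c0"
  shows gfun_gt_below_fixpoint: "\<And>x. 0 \<le> x \<Longrightarrow> x < c0 \<Longrightarrow> x < gfun d b x"
    and gfun_lt_above_fixpoint: "\<And>x. c0 < x \<Longrightarrow> x < 1 \<Longrightarrow> gfun d b x < x"
proof -
  let ?f = "\<lambda>x. gfun d b x - x"
  have deriv: "(?f has_real_derivative gfun_deriv d b x - 1) (at x)" if "0 \<le> x" for x
    using gfun_has_real_derivative[OF assms(2)] that by (auto intro!: derivative_eq_intros)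
  have mono: "strict_mono_on {0..1} (\<lambda>x. gfun_deriv d b x - 1)"
    using strict_mono_onD[OF strict_mono_on_gfun_deriv[OF assms(1,2)]]
    by (intro strict_mono_onI) auto
  have end_nonpos: "?f 1 \<le> 0"
    using gfun_1_le_one[OF assms(2,3)] by simp
  show "x < gfun d b x" if "0 \<le> x" "x < c0" for x
    using pos_before_zero[of 0 1 ?f, OF deriv mono end_nonpos, of c0 x] that assms by simp
  show "gfun d b x < x" if "c0 < x" "x < 1" for x
    using neg_after_zero[of 0 1 ?f, OF deriv mono end_nonpos, of c0 x] that assms by simp
qed

lemma gfun_fixpoint_exists:
  assumes "2 \<le> d" and "0 < b" and "b \<le> 1"
  shows "\<exists>c0 \<in> {0<..<1}. gfun d b c0 = c0"
proof -
  let ?f = "\<lambda>x. gfun d b x - x"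
  have "continuous_on {0..9/10} (gfun d b)"
    by (rule continuous_on_subset[OF continuous_on_gfun[OF assms(2)]]) auto
  then have "continuous_on {0..9/10} ?f"
    by (intro continuous_intros)
  moreover have "?f (9/10) \<le> 0" and "0 \<le> ?f 0"
    using gfun_nine_tenths_less[OF assms] gfun_0_pos[OF assms(2), of d] by simp_all
  ultimately obtain c0 where c0: "0 \<le> c0" "c0 \<le> 9/10" "?f c0 = 0"
    using IVT2'[of ?f "9/10" 0 0] by auto
  moreover have "c0 \<noteq> 0"
    using c0 gfun_0_pos[OF assms(2), of d] by auto
  ultimately show ?thesis
    by (intro bexI[of _ c0]) auto
qed

lemma gfun_fixpoint_unique:
  assumes "1 \<le> d" and "0 < b" and "b \<le> 1"
    and "c \<in> {0<..<1}" "gfun d b c = c" and "c' \<in> {0<..<1}" "gfun d b c' = c'"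
  shows "c = c'"
  using gfun_lt_above_fixpoint[OF assms(1-3), of c c'] gfun_lt_above_fixpoint[OF assms(1-3), of c' c]
    assms(4-7) by (cases c c' rule: linorder_cases) auto

lemma gfun_gt_iff_below_fixpoint:
  assumes "1 \<le> d" and "0 < b" and "b \<le> 1"
    and "c0 \<in> {0<..<1}" "gfun d b c0 = c0" and "x \<in> {0..1}"
  shows "x < gfun d b x \<longleftrightarrow> x < c0"
  using gfun_gt_below_fixpoint[OF assms(1-3), of c0 x] gfun_lt_above_fixpoint[OF assms(1-3), of c0 x]
    gfun_1_le_one[OF assms(2,3), of d] assms(4-6)
  by (cases x c0 rule: linorder_cases) (auto simp: le_less)

lemma gfun_iterates_tendsto_fixpoint:
  assumes "1 \<le> d" and "0 < b" and "b \<le> 1"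
    and c0: "c0 \<in> {0<..<1}" "gfun d b c0 = c0" and "0 \<le> c" "c < 1"
  shows "(\<lambda>i. (gfun d b ^^ i) c) \<longlonglongrightarrow> c0"
proof (rule iterates_tendsto_fixpoint[of 0 "max c c0"])
  show "mono_on {0..max c c0} (gfun d b)"
    using strict_mono_on_imp_mono_on[OF strict_mono_on_gfun[OF assms(1,2)]]
    by (rule mono_on_subset) auto
  show "continuous_on {0..max c c0} (gfun d b)"
    using continuous_on_gfun[OF assms(2)] by (rule continuous_on_subset) auto
  show "x < gfun d b x" if "0 \<le> x" "x < c0" for x
    using gfun_gt_below_fixpoint[OF assms(1-3), of c0 x] c0 that by auto
  show "gfun d b x < x" if "c0 < x" "x \<le> max c c0" for x
    using gfun_lt_above_fixpoint[OF assms(1-3), of c0 x] c0 that \<open>c < 1\<close> by auto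
qed (use c0 \<open>0 \<le> c\<close> in auto)

theorem lemma6p1:
  fixes d :: nat and b :: real
  assumes "d \<ge> 2" and "0 < b" and "b \<le> 1"
  shows "strict_mono_on {0<..1} (gfun d b)
    \<and> convex_on {0<..1} (gfun d b)
    \<and> (\<exists>!c0. c0 \<in> {0<..<1} \<and> gfun d b c0 = c0)
    \<and> (\<forall>c0. c0 \<in> {0<..<1} \<and> gfun d b c0 = c0 \<longrightarrow>
          (\<forall>c. 0 \<le> c \<and> c < 1 \<longrightarrow> (\<lambda>i. (gfun d b ^^ i) c) \<longlonglongrightarrow> c0)
        \<and> (\<forall>x\<in>{0..1}. gfun d b x > x \<longleftrightarrow> x < c0))"
proof (intro conjI allI impI ballI)
  have d: "1 \<le> d"
    using assms(1) by simp
  show "strict_mono_on {0<..1} (gfun d b)"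
    by (rule monotone_on_subset[OF strict_mono_on_gfun[OF d assms(2)]]) auto
  show "convex_on {0<..1} (gfun d b)"
    by (rule convex_on_subset[OF convex_on_gfun[OF d assms(2)]]) auto
  show "\<exists>!c0. c0 \<in> {0<..<1} \<and> gfun d b c0 = c0"
    using gfun_fixpoint_exists[OF assms] gfun_fixpoint_unique[OF d assms(2,3)] by blast
  fix c0 assume c0: "c0 \<in> {0<..<1} \<and> gfun d b c0 = c0"
  show "(\<lambda>i. (gfun d b ^^ i) c) \<longlonglongrightarrow> c0" if "0 \<le> c \<and> c < 1" for c
    using gfun_iterates_tendsto_fixpoint[OF d assms(2,3)] c0 that by blast
  show "gfun d b x > x \<longleftrightarrow> x < c0" if "x \<in> {0..1}" for x
    using gfun_gt_iff_below_fixpoint[OF d assms(2,3)] c0 that by blast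
qed

end
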